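(* Let $p \in [0,1]$ and let $S(n,j) = \Pr[I_{n,p} \le j] = \sum_{i=0}^{j}\binom{n}{i}p^i(1-p)^{n-i}$, where $I_{n,p}$ is a binomial random variable with $n$ trials and success probability $p$. Fix an integer $k \ge 0$. Then for every $n \ge k$, $S(n+1, n+1-k) \ge S(n, n-k)$; that is, $S(n,n-k)$ is monotonically non-decreasing in $n$.
   Context: $S(n,j)$ is called the (upper) truncated binomial distribution. *)

theory Defs
  imports Complex_Main
begin

definition S :: "real \<Rightarrow> nat \<Rightarrow> nat \<Rightarrow> real" where
  "S p n j = (\<Sum>i=0..j. real (n choose i) * p ^ i * (1 - p) ^ (n - i))"

end

theory Submission
  imports Defs
begin

text \<open>Conditioning on the outcome of the last trial gives the Pascal-type recursion
  \<open>S(n+1, j+1) = (1-p) S(n, j+1) + p S(n, j)\<close>.  With \<open>j = n - k\<close> the right-hand side is a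
  convex combination of \<open>S(n, n-k+1)\<close> and \<open>S(n, n-k)\<close>, and both are at least \<open>S(n, n-k)\<close>
  because \<open>S(n, j)\<close> is non-decreasing in \<open>j\<close>.\<close>

lemma binomial_term_Suc_Suc:
  fixes p :: "'a :: comm_ring_1"
  shows "of_nat (Suc n choose Suc i) * p ^ Suc i * (1 - p) ^ (Suc n - Suc i) =
    (1 - p) * (of_nat (n choose Suc i) * p ^ Suc i * (1 - p) ^ (n - Suc i)) +
    p * (of_nat (n choose i) * p ^ i * (1 - p) ^ (n - i))"
proof (cases "i < n")
  case True
  then have "n - i = Suc (n - Suc i)" by simp
  then show ?thesis by (simp add: algebra_simps)
next
  case False
  then show ?thesis by (simp add: algebra_simps binomial_eq_0)
qed

lemma S_Suc_Suc: "S p (Suc n) (Suc j) = (1 - p) * S p n (Suc j) + p * S p n j"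
proof -
  have "S p (Suc n) (Suc j) =
      (1 - p) * (1 - p) ^ n +
      (\<Sum>i\<le>j. (1 - p) * (real (n choose Suc i) * p ^ Suc i * (1 - p) ^ (n - Suc i)) +
                p * (real (n choose i) * p ^ i * (1 - p) ^ (n - i)))"
    unfolding S_def atLeast0AtMost sum.atMost_Suc_shift binomial_term_Suc_Suc by simp
  also have "\<dots> = (1 - p) * S p n (Suc j) + p * S p n j"
    unfolding S_def atLeast0AtMost sum.atMost_Suc_shift sum.distrib sum_distrib_left[symmetric]
    by (simp add: algebra_simps)
  finally show ?thesis .
qed

lemma S_le_S_Suc:
  assumes "0 \<le> p" and "p \<le> 1"
  shows "S p n j \<le> S p n (Suc j)"
  using assms by (simp add: S_def)

theorem mainTheorem2:
  fixes p :: real and k n :: nat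
  assumes "0 \<le> p" and "p \<le> 1" and "k \<le> n"
  shows "S p (n + 1) (n + 1 - k) \<ge> S p n (n - k)"
proof -
  have "S p (n + 1) (n + 1 - k) = (1 - p) * S p n (Suc (n - k)) + p * S p n (n - k)"
    using assms(3) S_Suc_Suc[of p n "n - k"] by (simp add: Suc_diff_le)
  also have "\<dots> \<ge> (1 - p) * S p n (n - k) + p * S p n (n - k)"
    using S_le_S_Suc[OF assms(1,2)] assms(2) by (simp add: mult_left_mono)
  finally show ?thesis by (simp add: algebra_simps)
qed

end
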